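(* Let $\lambda\in[-1,1)$. Every continuous $\lambda$-curve $\gamma:I\to\mathbb{R}^d$ has the $\lambda$-cone property.
   Context: $\mathbb{R}^d$ carries the Euclidean inner product $\langle\cdot,\cdot\rangle$ and norm $\|\cdot\|$; $I\subset\mathbb{R}$ is an interval; $\mathbb{S}^{d-1}$ is the unit sphere. $\gamma$ is a $\lambda$-curve if for all $t_1\le t_2\le t_3$ in $I$: $\|\gamma(t_1)-\gamma(t_2)\|\le\|\gamma(t_1)-\gamma(t_3)\|+\lambda\|\gamma(t_2)-\gamma(t_3)\|$. For $t\in I$, the set of forward secants is $\mathrm{sec}^+(t)=\{q\in\mathbb{S}^{d-1}: q=\lim_k \frac{\gamma(t_k)-\gamma(t)}{\|\gamma(t_k)-\gamma(t)\|}$ for some sequence $t_k\to t$ with $t_k>t\}$. A continuous curve $\gamma$ has the $\lambda$-cone property if for every $t\in I$, every $q\in\mathrm{sec}^+(t)$ and every $u\in I$ with $u<t$: $\big\langle q,\frac{\gamma(u)-\gamma(t)}{\|\gamma(u)-\gamma(t)\|}\big\rangle\le\lambda$. *)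

theory Defs
  imports "HOL-Analysis.Analysis"
begin

definition lambda_curve :: "real \<Rightarrow> real set \<Rightarrow> (real \<Rightarrow> 'a::euclidean_space) \<Rightarrow> bool" where
  "lambda_curve lam I \<gamma> \<longleftrightarrow>
     (\<forall>t1\<in>I. \<forall>t2\<in>I. \<forall>t3\<in>I. t1 \<le> t2 \<and> t2 \<le> t3 \<longrightarrow>
        norm (\<gamma> t1 - \<gamma> t2) \<le> norm (\<gamma> t1 - \<gamma> t3) + lam * norm (\<gamma> t2 - \<gamma> t3))"

text \<open>Forward secants at t: unit vectors that are limits of normalized differences
  along sequences in I approaching t strictly from the right (differences nonzero,
  so that the quotients are defined).\<close>

definition sec_plus :: "real set \<Rightarrow> (real \<Rightarrow> 'a::euclidean_space) \<Rightarrow> real \<Rightarrow> 'a set" where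
  "sec_plus I \<gamma> t = {q. norm q = 1 \<and>
     (\<exists>tk :: nat \<Rightarrow> real. (\<forall>k. tk k \<in> I \<and> tk k > t \<and> \<gamma> (tk k) \<noteq> \<gamma> t) \<and>
        tk \<longlonglongrightarrow> t \<and>
        (\<lambda>k. (\<gamma> (tk k) - \<gamma> t) /\<^sub>R norm (\<gamma> (tk k) - \<gamma> t)) \<longlonglongrightarrow> q)}"

definition cone_property :: "real \<Rightarrow> real set \<Rightarrow> (real \<Rightarrow> 'a::euclidean_space) \<Rightarrow> bool" where
  "cone_property lam I \<gamma> \<longleftrightarrow> continuous_on I \<gamma> \<and>
     (\<forall>t\<in>I. \<forall>q\<in>sec_plus I \<gamma> t. \<forall>u\<in>I. u < t \<and> \<gamma> u \<noteq> \<gamma> t \<longrightarrow>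
        inner q ((\<gamma> u - \<gamma> t) /\<^sub>R norm (\<gamma> u - \<gamma> t)) \<le> lam)"

end

theory Submission
  imports Defs
begin

text \<open>Put \<open>a = \<gamma> u - \<gamma> t\<close> and \<open>v = \<gamma> s - \<gamma> t\<close> for \<open>u < t < s\<close>. The \<open>\<lambda>\<close>-curve
  inequality for \<open>u \<le> t \<le> s\<close> reads \<open>|a| \<le> |a - v| + \<lambda> |v|\<close>; squaring it (possible once
  \<open>|v|\<close> is small) gives \<open>\<langle>a/|a|, v/|v|\<rangle> \<le> \<lambda> + (1 - \<lambda>\<^sup>2) |v| / (2 |a|)\<close>. Along a sequence
  \<open>s \<rightarrow> t\<^sup>+\<close> realising a forward secant \<open>q\<close>, continuity forces \<open>|v| \<rightarrow> 0\<close>, and the bound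
  passes to the limit as \<open>\<langle>q, a/|a|\<rangle> \<le> \<lambda>\<close>.\<close>

lemma inner_le_of_norm_le_norm_diff:
  fixes a v :: "'a::real_inner"
  assumes "norm a \<le> norm (a - v) + lam * norm v" and "lam * norm v \<le> norm a"
  shows "2 * inner a v \<le> 2 * lam * norm v * norm a + (1 - lam\<^sup>2) * (norm v)\<^sup>2"
proof -
  have "(norm a - lam * norm v)\<^sup>2 \<le> (norm (a - v))\<^sup>2"
    using assms by (intro power_mono) auto
  also have "(norm (a - v))\<^sup>2 = (norm a)\<^sup>2 - 2 * inner a v + (norm v)\<^sup>2"
    by (simp add: power2_norm_eq_inner inner_diff inner_commute)
  finally show ?thesis by (simp add: power2_eq_square algebra_simps)
qed

lemma inner_sgn_le_of_norm_le_norm_diff: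
  fixes a v :: "'a::real_inner"
  assumes "a \<noteq> 0" and "v \<noteq> 0"
    and "norm a \<le> norm (a - v) + lam * norm v" and "lam * norm v \<le> norm a"
  shows "inner (sgn a) (sgn v) \<le> lam + (1 - lam\<^sup>2) * norm v / (2 * norm a)"
proof -
  have "inner (sgn a) (sgn v) = inner a v / (norm a * norm v)"
    by (simp add: sgn_div_norm field_simps)
  also have "\<dots> \<le> lam + (1 - lam\<^sup>2) * norm v / (2 * norm a)"
    using inner_le_of_norm_le_norm_diff[OF assms(3,4)] assms(1,2)
    by (simp add: field_simps power2_eq_square)
  finally show ?thesis .
qed

lemma inner_sgn_le_of_secant_limit:
  fixes a q :: "'a::real_inner" and v :: "nat \<Rightarrow> 'a"
  assumes "a \<noteq> 0" and "\<And>k. v k \<noteq> 0" and "v \<longlonglongrightarrow> 0" and "(\<lambda>k. sgn (v k)) \<longlonglongrightarrow> q"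
    and "\<And>k. norm a \<le> norm (a - v k) + lam * norm (v k)"
  shows "inner (sgn a) q \<le> lam"
proof -
  have norm_v: "(\<lambda>k. norm (v k)) \<longlonglongrightarrow> 0"
    using assms(3) tendsto_norm_zero by blast
  have "\<forall>\<^sub>F k in sequentially. (\<bar>lam\<bar> + 1) * norm (v k) < norm a"
    using order_tendstoD(2)[OF norm_v, of "norm a / (\<bar>lam\<bar> + 1)"] assms(1)
    by (simp add: field_simps)
  then have "\<forall>\<^sub>F k in sequentially.
      inner (sgn a) (sgn (v k)) \<le> lam + (1 - lam\<^sup>2) * norm (v k) / (2 * norm a)"
  proof eventually_elim
    case (elim k)
    have "lam * norm (v k) \<le> (\<bar>lam\<bar> + 1) * norm (v k)"
      by (intro mult_right_mono) auto
    with elim show ?case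
      using inner_sgn_le_of_norm_le_norm_diff[OF assms(1,2,5)] by simp
  qed
  moreover have "(\<lambda>k. inner (sgn a) (sgn (v k))) \<longlonglongrightarrow> inner (sgn a) q"
    using assms(4) by (intro tendsto_intros)
  moreover have "(\<lambda>k. lam + (1 - lam\<^sup>2) * norm (v k) / (2 * norm a)) \<longlonglongrightarrow> lam"
    using tendsto_add[OF tendsto_const tendsto_divide[OF tendsto_mult[OF tendsto_const norm_v]
          tendsto_const]] assms(1) by simp
  ultimately show ?thesis
    using tendsto_le[OF trivial_limit_sequentially] by blast
qed

theorem proposition2p6:
  fixes \<gamma> :: "real \<Rightarrow> 'a::euclidean_space" and I :: "real set" and lam :: real
  assumes "-1 \<le> lam" and "lam < 1"
    and "is_interval I"
    and "continuous_on I \<gamma>"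
    and "lambda_curve lam I \<gamma>"
  shows "cone_property lam I \<gamma>"
  unfolding cone_property_def
proof (intro conjI ballI impI)
  fix t q u assume "t \<in> I" and "q \<in> sec_plus I \<gamma> t" and "u \<in> I" and "u < t \<and> \<gamma> u \<noteq> \<gamma> t"
  then obtain s where s: "\<And>k. s k \<in> I \<and> t < s k \<and> \<gamma> (s k) \<noteq> \<gamma> t"
    and "s \<longlonglongrightarrow> t" and "(\<lambda>k. sgn (\<gamma> (s k) - \<gamma> t)) \<longlonglongrightarrow> q"
    unfolding sec_plus_def sgn_div_norm by blast
  moreover have "(\<lambda>k. \<gamma> (s k)) \<longlonglongrightarrow> \<gamma> t"
    using assms(4) \<open>t \<in> I\<close> s \<open>s \<longlonglongrightarrow> t\<close> unfolding continuous_on_sequentially o_def by blast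
  moreover have "norm (\<gamma> u - \<gamma> t) \<le> norm (\<gamma> u - \<gamma> t - (\<gamma> (s k) - \<gamma> t)) + lam * norm (\<gamma> (s k) - \<gamma> t)"
    for k
    using assms(5) \<open>u \<in> I\<close> \<open>t \<in> I\<close> s[of k] \<open>u < t \<and> _\<close>
    unfolding lambda_curve_def by (force simp: norm_minus_commute)
  ultimately have "inner (sgn (\<gamma> u - \<gamma> t)) q \<le> lam"
    using \<open>u < t \<and> _\<close> by (intro inner_sgn_le_of_secant_limit) (auto simp: LIM_zero)
  then show "inner q ((\<gamma> u - \<gamma> t) /\<^sub>R norm (\<gamma> u - \<gamma> t)) \<le> lam"
    by (simp add: sgn_div_norm inner_commute)
qed (fact assms(4))

end
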